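(* Let $\mathcal A$ be a unital C*-algebra with centre $\mathcal Z$, $\rho$ a unital endomorphism of $\mathcal A$ with weak permutation symmetry $\varepsilon$ and dimension $d\ge2$, and $\mathcal B$ a minimal crossed product of $\mathcal A$ by $\rho$, with isometries $\psi_1,\dots,\psi_d$ and endomorphism $\sigma$. Let $E=\mathrm{span}\{\psi_if: i=1,\dots,d,\ f\in C(X^\rho)\}\subseteq\mathcal B$. Then $E=(\iota_{\mathcal B},\sigma):=\{b\in\mathcal B:\sigma(b')b=bb'\ \forall b'\in\mathcal B\}$.
   Context: For a unital endomorphism $\rho$ of $\mathcal A$: $(\rho^r,\rho^s)=\{t\in\mathcal A:\rho^s(a)t=t\rho^r(a)\ \forall a\in\mathcal A\}$ ($\rho^0=\mathrm{id}$). $\mathcal Z^\rho=\{f\in\mathcal Z:\rho(f)=f\}$, and $X^\rho$ is its spectrum, so $\mathcal Z^\rho\cong C(X^\rho)$. $\mathbb P_\infty$ is the group of finite permutations of $\mathbb N=\{1,2,\dots\}$, $\mathbb P_n$ those of $\{1,\dots,n\}$, and $\mathbb S$ the shift $(\mathbb Sp)(1)=1$, $(\mathbb Sp)(n)=1+p(n-1)$. A weak permutation symmetry (WPS) of $\rho$ is a unitary representation $p\mapsto\varepsilon(p)$ of $\mathbb P_\infty$ in $\mathcal A$ with $\varepsilon(\mathbb Sp)=\rho(\varepsilon(p))$ and $\varepsilon(p)\in(\rho^n,\rho^n)$ for $p\in\mathbb P_n$; $d$ denotes the (Doplicher–Roberts) dimension of $(\rho,\varepsilon)$. Let $\mathcal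 O_d$ be the Cuntz algebra on $d$ generators and, for $p\in\mathbb P_n$, $\theta(p)\in\mathcal O_d$ the unitary implementing the permutation $p$ of the tensor factors of $H^{\otimes n}$ ($H=\mathbb C^d$), written in the canonical generators. A minimal crossed product (mCP) of $\mathcal A$ by $\rho$ is a unital C*-algebra $\mathcal B\supseteq\mathcal A$ such that: (1) $\mathcal B$ is generated by $\mathcal A$ and isometries $\psi_1,\dots,\psi_d$ with $\psi_i^*\psi_j=\delta_{ij}1$, $\sum_i\psi_i\psi_i^*=1$ (giving a monomorphism $j:\mathcal O_d\to\mathcal B$), and one sets $\sigma(b)=\sum_i\psi_ib\psi_i^*$, $b\in\mathcal B$; (2) $\sigma(a)=\rho(a)$ for $a\in\mathcal A$; (3) $\mathcal A'\cap\mathcal B=\mathcal Z$; (4) $j(\theta(p))=\varepsilon(p)$ for all $p\in\mathbb P_\infty$. *)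

theory Defs
  imports "HOL-Analysis.Analysis"
begin

class cstar_algebra = real_normed_algebra_1 + banach +
  fixes scaleC :: "complex \<Rightarrow> 'a \<Rightarrow> 'a"
    and adj :: "'a \<Rightarrow> 'a"
  assumes scaleC_add_right: "scaleC c (x + y) = scaleC c x + scaleC c y"
    and scaleC_add_left: "scaleC (c + e) x = scaleC c x + scaleC e x"
    and scaleC_scaleC: "scaleC c (scaleC e x) = scaleC (c * e) x"
    and scaleC_one: "scaleC 1 x = x"
    and scaleR_scaleC: "scaleR r x = scaleC (complex_of_real r) x"
    and norm_scaleC: "norm (scaleC c x) = cmod c * norm x"
    and mult_scaleC_left: "scaleC c x * y = scaleC c (x * y)"
    and mult_scaleC_right: "x * scaleC c y = scaleC c (x * y)"
    and adj_adj: "adj (adj x) = x"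
    and adj_add: "adj (x + y) = adj x + adj y"
    and adj_scaleC: "adj (scaleC c x) = scaleC (cnj c) (adj x)"
    and adj_mult: "adj (x * y) = adj y * adj x"
    and cstar_identity: "norm (adj x * x) = (norm x)\<^sup>2"

definition csubalg :: "'a::cstar_algebra set \<Rightarrow> bool" where
  "csubalg S \<longleftrightarrow> 1 \<in> S \<and> closed S \<and>
     (\<forall>x\<in>S. \<forall>y\<in>S. x + y \<in> S \<and> x * y \<in> S) \<and>
     (\<forall>c. \<forall>x\<in>S. scaleC c x \<in> S) \<and> (\<forall>x\<in>S. adj x \<in> S)"

definition cstar_span :: "'a::cstar_algebra set \<Rightarrow> 'a set" where
  "cstar_span S = {(\<Sum>k<(n::nat). scaleC (c k) (v k)) | n c v. \<forall>k<n. v k \<in> S}"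

definition cunitary :: "'a::cstar_algebra \<Rightarrow> bool" where
  "cunitary u \<longleftrightarrow> adj u * u = 1 \<and> u * adj u = 1"

definition cisometry :: "'a::cstar_algebra \<Rightarrow> bool" where
  "cisometry v \<longleftrightarrow> adj v * v = 1"

definition centre :: "'a::cstar_algebra set \<Rightarrow> 'a set" where
  "centre A = {z \<in> A. \<forall>a\<in>A. z * a = a * z}"

definition unital_endo :: "'a::cstar_algebra set \<Rightarrow> ('a \<Rightarrow> 'a) \<Rightarrow> bool" where
  "unital_endo A \<rho> \<longleftrightarrow> (\<forall>a\<in>A. \<rho> a \<in> A) \<and> \<rho> 1 = 1 \<and>
     (\<forall>a\<in>A. \<forall>b\<in>A. \<rho> (a + b) = \<rho> a + \<rho> b \<and> \<rho> (a * b) = \<rho> a * \<rho> b) \<and>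
     (\<forall>c. \<forall>a\<in>A. \<rho> (scaleC c a) = scaleC c (\<rho> a)) \<and>
     (\<forall>a\<in>A. \<rho> (adj a) = adj (\<rho> a))"

definition intertw :: "'a::cstar_algebra set \<Rightarrow> ('a \<Rightarrow> 'a) \<Rightarrow> nat \<Rightarrow> nat \<Rightarrow> 'a set" where
  "intertw A \<rho> r s = {t \<in> A. \<forall>a\<in>A. (\<rho>^^s) a * t = t * (\<rho>^^r) a}"

text \<open>Fixed-point algebra Z^rho of the centre; identified with C(X^rho) via Gelfand.\<close>
definition centre_fix :: "'a::cstar_algebra set \<Rightarrow> ('a \<Rightarrow> 'a) \<Rightarrow> 'a set" where
  "centre_fix A \<rho> = {f \<in> centre A. \<rho> f = f}"

text \<open>Permutations of {1,2,...} are encoded as bijections of nat fixing 0.\<close>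
definition finperm :: "(nat \<Rightarrow> nat) \<Rightarrow> bool" where
  "finperm p \<longleftrightarrow> bij p \<and> p 0 = 0 \<and> finite {k. p k \<noteq> k}"

definition permn :: "nat \<Rightarrow> (nat \<Rightarrow> nat) \<Rightarrow> bool" where
  "permn n p \<longleftrightarrow> finperm p \<and> (\<forall>k>n. p k = k)"

definition shiftp :: "(nat \<Rightarrow> nat) \<Rightarrow> nat \<Rightarrow> nat" where
  "shiftp p = (\<lambda>k. if k \<le> 1 then k else 1 + p (k - 1))"

definition WPS :: "'a::cstar_algebra set \<Rightarrow> ('a \<Rightarrow> 'a) \<Rightarrow> ((nat \<Rightarrow> nat) \<Rightarrow> 'a) \<Rightarrow> bool" where
  "WPS A \<rho> \<epsilon> \<longleftrightarrow>
     (\<forall>p. finperm p \<longrightarrow> \<epsilon> p \<in> A \<and> cunitary (\<epsilon> p)) \<and>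
     (\<forall>p q. finperm p \<longrightarrow> finperm q \<longrightarrow> \<epsilon> (p \<circ> q) = \<epsilon> p * \<epsilon> q) \<and>
     (\<forall>p. finperm p \<longrightarrow> \<epsilon> (shiftp p) = \<rho> (\<epsilon> p)) \<and>
     (\<forall>n p. permn n p \<longrightarrow> \<epsilon> p \<in> intertw A \<rho> n n)"

primrec psiword :: "(nat \<Rightarrow> 'a::cstar_algebra) \<Rightarrow> (nat \<Rightarrow> nat) \<Rightarrow> nat \<Rightarrow> 'a" where
  "psiword \<psi> I 0 = 1"
| "psiword \<psi> I (Suc n) = psiword \<psi> I n * \<psi> (I (Suc n))"

text \<open>Multi-indices of length n with entries in {0..<d} (generators indexed by i < d).\<close>
definition multiidx :: "nat \<Rightarrow> nat \<Rightarrow> (nat \<Rightarrow> nat) set" where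
  "multiidx d n = {I. (\<forall>k\<in>{1..n}. I k < d) \<and> (\<forall>k. k \<notin> {1..n} \<longrightarrow> I k = 0)}"

text \<open>Image under j of thetaB(p), p in P_n: the cunitary sending
  e_{i_1} (x) ... (x) e_{i_n} to e_{i_{p^-1(1)}} (x) ... (x) e_{i_{p^-1(n)}}.\<close>
definition thetaB :: "(nat \<Rightarrow> 'a::cstar_algebra) \<Rightarrow> nat \<Rightarrow> nat \<Rightarrow> (nat \<Rightarrow> nat) \<Rightarrow> 'a" where
  "thetaB \<psi> d n p = (\<Sum>I\<in>multiidx d n. psiword \<psi> (I \<circ> inv p) n * adj (psiword \<psi> I n))"

definition sigmaB :: "(nat \<Rightarrow> 'a::cstar_algebra) \<Rightarrow> nat \<Rightarrow> 'a \<Rightarrow> 'a" where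
  "sigmaB \<psi> d b = (\<Sum>i<d. \<psi> i * b * adj (\<psi> i))"

text \<open>The ambient algebra (the type) is B; A is a unital C*-subalgebra.\<close>
definition mCP :: "'a::cstar_algebra set \<Rightarrow> ('a \<Rightarrow> 'a) \<Rightarrow> ((nat \<Rightarrow> nat) \<Rightarrow> 'a)
    \<Rightarrow> nat \<Rightarrow> (nat \<Rightarrow> 'a) \<Rightarrow> bool" where
  "mCP A \<rho> \<epsilon> d \<psi> \<longleftrightarrow>
     (\<forall>S. csubalg S \<and> A \<subseteq> S \<and> (\<forall>i<d. \<psi> i \<in> S) \<longrightarrow> S = UNIV) \<and>
     (\<forall>i<d. \<forall>j<d. adj (\<psi> i) * \<psi> j = (if i = j then 1 else 0)) \<and>
     (\<Sum>i<d. \<psi> i * adj (\<psi> i)) = 1 \<and>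
     (\<forall>a\<in>A. sigmaB \<psi> d a = \<rho> a) \<and>
     {b. \<forall>a\<in>A. a * b = b * a} = centre A \<and>
     (\<forall>n p. permn n p \<longrightarrow> thetaB \<psi> d n p = \<epsilon> p)"

end

theory Submission
  imports Defs
begin

text \<open>If \<open>b\<close> intertwines \<open>\<iota>\<close> and \<open>\<sigma>\<close>, the Cuntz relations make each
\<open>\<psi>\<^sub>i\<^sup>* b\<close> commute with all of \<open>\<B>\<close>, so it lies in the relative commutant
\<open>\<A>' \<inter> \<B> = \<Z>\<close>, and \<open>\<sigma>(\<psi>\<^sub>i\<^sup>* b) = \<psi>\<^sub>i\<^sup>* b\<close> shows it is \<open>\<rho>\<close>-fixed; then
\<open>b = \<Sum>\<^sub>i \<psi>\<^sub>i (\<psi>\<^sub>i\<^sup>* b)\<close>. Conversely an element of \<open>\<Z>\<^sup>\<rho>\<close> commutes with \<open>\<A>\<close> and,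
being \<open>\<sigma>\<close>-fixed, with every \<open>\<psi>\<^sub>i\<close>; as these generate \<open>\<B>\<close> it is central in \<open>\<B>\<close>, and
\<open>\<sigma>(b') \<psi>\<^sub>i f = \<psi>\<^sub>i b' f = \<psi>\<^sub>i f b'\<close>.\<close>

lemma sigmaB_mult_isometry:
  assumes orth: "\<forall>i<d. \<forall>j<d. adj (\<psi> i) * \<psi> j = (if i = j then 1 else 0)"
    and k: "k < d"
  shows "sigmaB \<psi> d x * \<psi> k = \<psi> k * x"
proof -
  have "sigmaB \<psi> d x * \<psi> k = (\<Sum>j<d. \<psi> j * x * (adj (\<psi> j) * \<psi> k))"
    unfolding sigmaB_def by (simp add: sum_distrib_right mult.assoc)
  also have "\<dots> = (\<Sum>j<d. if j = k then \<psi> k * x else 0)"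
    by (rule sum.cong) (use orth k in auto)
  also have "\<dots> = \<psi> k * x" using k by simp
  finally show ?thesis .
qed

lemma adj_isometry_mult_sigmaB:
  assumes orth: "\<forall>i<d. \<forall>j<d. adj (\<psi> i) * \<psi> j = (if i = j then 1 else 0)"
    and k: "k < d"
  shows "adj (\<psi> k) * sigmaB \<psi> d x = x * adj (\<psi> k)"
proof -
  have "adj (\<psi> k) * sigmaB \<psi> d x = (\<Sum>j<d. (adj (\<psi> k) * \<psi> j) * x * adj (\<psi> j))"
    unfolding sigmaB_def by (simp add: sum_distrib_left mult.assoc)
  also have "\<dots> = (\<Sum>j<d. if j = k then x * adj (\<psi> k) else 0)"
    by (rule sum.cong) (use orth k in auto)
  also have "\<dots> = x * adj (\<psi> k)" using k by simp
  finally show ?thesis .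
qed

lemma cstar_span_least:
  assumes "S \<subseteq> T" and "0 \<in> T"
    and "\<And>x y. x \<in> T \<Longrightarrow> y \<in> T \<Longrightarrow> x + y \<in> T"
    and "\<And>c x. x \<in> T \<Longrightarrow> scaleC c x \<in> T"
  shows "cstar_span S \<subseteq> T"
proof
  fix x assume "x \<in> cstar_span S"
  then obtain n c v where x: "x = (\<Sum>k<(n::nat). scaleC (c k) (v k))" and v: "\<forall>k<n. v k \<in> S"
    unfolding cstar_span_def by auto
  have "(\<Sum>k<m. scaleC (c k) (v k)) \<in> T" if "m \<le> n" for m
    using that
  proof (induction m)
    case (Suc m)
    then have "v m \<in> T" using v assms(1) by auto
    then show ?case using Suc assms(3,4) by simp
  qed (use assms(2) in simp)
  then show "x \<in> T" using x by simp
qed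

lemma sum_in_cstar_span:
  assumes "\<forall>k<n. v k \<in> S"
  shows "(\<Sum>k<(n::nat). v k) \<in> cstar_span S"
proof -
  have "(\<Sum>k<n. v k) = (\<Sum>k<n. scaleC ((\<lambda>_. 1) k) (v k))" by (simp add: scaleC_one)
  with assms show ?thesis
    unfolding cstar_span_def by (intro CollectI exI[of _ n] exI[of _ "\<lambda>_. 1"] exI[of _ v]) simp
qed

lemma csubalg_commutant_adj_pair:
  "csubalg {b. f * b = b * f \<and> adj f * b = b * adj f}"
  unfolding csubalg_def
proof (intro conjI ballI allI)
  have "closed {b. f * b = b * f}" "closed {b. adj f * b = b * adj f}"
    by (rule closed_Collect_eq, (intro continuous_intros)+)+
  then show "closed {b. f * b = b * f \<and> adj f * b = b * adj f}"
    by (simp add: Collect_conj_eq closed_Int)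
next
  fix x y assume "x \<in> {b. f * b = b * f \<and> adj f * b = b * adj f}"
    "y \<in> {b. f * b = b * f \<and> adj f * b = b * adj f}"
  then have h: "f * x = x * f" "adj f * x = x * adj f" "f * y = y * f" "adj f * y = y * adj f"
    by auto
  show "x + y \<in> {b. f * b = b * f \<and> adj f * b = b * adj f}"
    using h by (simp add: distrib_left distrib_right)
  show "x * y \<in> {b. f * b = b * f \<and> adj f * b = b * adj f}"
    using h by (metis (mono_tags, lifting) mem_Collect_eq mult.assoc)
next
  fix x assume "x \<in> {b. f * b = b * f \<and> adj f * b = b * adj f}"
  then have "adj (adj f * x) = adj (x * adj f)" "adj (f * x) = adj (x * f)" by auto
  then show "adj x \<in> {b. f * b = b * f \<and> adj f * b = b * adj f}"
    by (simp add: adj_mult adj_adj)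
qed (simp_all add: mult_scaleC_left mult_scaleC_right)

lemma adj_in_centre_fix:
  assumes A: "csubalg A" and \<rho>: "unital_endo A \<rho>" and f: "f \<in> centre_fix A \<rho>"
  shows "adj f \<in> centre_fix A \<rho>"
proof -
  have fA: "f \<in> A" and fc: "\<forall>a\<in>A. f * a = a * f" and \<rho>f: "\<rho> f = f"
    using f unfolding centre_fix_def centre_def by auto
  have adjA: "\<forall>x\<in>A. adj x \<in> A" using A unfolding csubalg_def by auto
  have "adj f * a = a * adj f" if "a \<in> A" for a
  proof -
    have "adj (f * adj a) = adj (adj a * f)" using fc adjA that by auto
    then show ?thesis by (simp add: adj_mult adj_adj)
  qed
  moreover have "\<rho> (adj f) = adj f" using \<rho> fA \<rho>f unfolding unital_endo_def by auto
  ultimately show ?thesis using fA adjA unfolding centre_fix_def centre_def by auto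
qed

lemma centre_fix_commute_isometry:
  assumes m: "mCP A \<rho> \<epsilon> d \<psi>" and f: "f \<in> centre_fix A \<rho>" and k: "k < d"
  shows "f * \<psi> k = \<psi> k * f"
proof -
  have orth: "\<forall>i<d. \<forall>j<d. adj (\<psi> i) * \<psi> j = (if i = j then 1 else 0)"
    and "\<forall>a\<in>A. sigmaB \<psi> d a = \<rho> a"
    using m unfolding mCP_def by auto
  moreover have "f \<in> A" "\<rho> f = f" using f unfolding centre_fix_def centre_def by auto
  ultimately have "sigmaB \<psi> d f = f" by auto
  then show ?thesis using sigmaB_mult_isometry[OF orth k, of f] by simp
qed

lemma centre_fix_central:
  assumes A: "csubalg A" and \<rho>: "unital_endo A \<rho>" and m: "mCP A \<rho> \<epsilon> d \<psi>"
    and f: "f \<in> centre_fix A \<rho>"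
  shows "f * b = b * f"
proof -
  let ?S = "{b. f * b = b * f \<and> adj f * b = b * adj f}"
  have f': "adj f \<in> centre_fix A \<rho>" using adj_in_centre_fix[OF A \<rho> f] .
  have "A \<subseteq> ?S" using f f' unfolding centre_fix_def centre_def by auto
  moreover have "\<forall>i<d. \<psi> i \<in> ?S"
    using centre_fix_commute_isometry[OF m] f f' by auto
  moreover have "\<forall>S. csubalg S \<and> A \<subseteq> S \<and> (\<forall>i<d. \<psi> i \<in> S) \<longrightarrow> S = UNIV"
    using m unfolding mCP_def by auto
  ultimately have "?S = UNIV" using csubalg_commutant_adj_pair by blast
  then show ?thesis by auto
qed

lemma isometry_mult_centre_fix_intertw:
  assumes A: "csubalg A" and \<rho>: "unital_endo A \<rho>" and m: "mCP A \<rho> \<epsilon> d \<psi>"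
    and i: "i < d" and f: "f \<in> centre_fix A \<rho>"
  shows "sigmaB \<psi> d b' * (\<psi> i * f) = \<psi> i * f * b'"
proof -
  have orth: "\<forall>i<d. \<forall>j<d. adj (\<psi> i) * \<psi> j = (if i = j then 1 else 0)"
    using m unfolding mCP_def by auto
  have "sigmaB \<psi> d b' * (\<psi> i * f) = \<psi> i * b' * f"
    using sigmaB_mult_isometry[OF orth i] by (simp add: mult.assoc[symmetric])
  also have "\<dots> = \<psi> i * f * b'"
    using centre_fix_central[OF A \<rho> m f, of b'] by (simp add: mult.assoc)
  finally show ?thesis .
qed

lemma adj_isometry_mult_intertw_in_centre_fix:
  assumes m: "mCP A \<rho> \<epsilon> d \<psi>" and b: "\<forall>b'. sigmaB \<psi> d b' * b = b * b'" and i: "i < d"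
  shows "adj (\<psi> i) * b \<in> centre_fix A \<rho>"
proof -
  have orth: "\<forall>i<d. \<forall>j<d. adj (\<psi> i) * \<psi> j = (if i = j then 1 else 0)"
    and \<sigma>A: "\<forall>a\<in>A. sigmaB \<psi> d a = \<rho> a"
    and cuntz: "(\<Sum>i<d. \<psi> i * adj (\<psi> i)) = 1"
    and commutant: "{b. \<forall>a\<in>A. a * b = b * a} = centre A"
    using m unfolding mCP_def by auto
  let ?g = "adj (\<psi> i) * b"
  have central: "?g * b' = b' * ?g" for b'
  proof -
    have "?g * b' = adj (\<psi> i) * (sigmaB \<psi> d b' * b)" using b by (simp add: mult.assoc)
    also have "\<dots> = b' * ?g"
      using adj_isometry_mult_sigmaB[OF orth i, of b'] by (simp add: mult.assoc[symmetric])
    finally show ?thesis .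
  qed
  then have gZ: "?g \<in> centre A" using commutant by auto
  have "sigmaB \<psi> d ?g = (\<Sum>j<d. \<psi> j * adj (\<psi> j)) * ?g"
    unfolding sigmaB_def sum_distrib_right by (intro sum.cong refl) (metis central mult.assoc)
  then have "\<rho> ?g = ?g" using \<sigma>A gZ cuntz unfolding centre_def by simp
  with gZ show ?thesis unfolding centre_fix_def by auto
qed

theorem mainTheorem2:
  fixes A :: "'b::cstar_algebra set"
    and \<rho> :: "'b \<Rightarrow> 'b"
    and \<epsilon> :: "(nat \<Rightarrow> nat) \<Rightarrow> 'b"
    and d :: nat
    and \<psi> :: "nat \<Rightarrow> 'b"
  assumes "csubalg A"
    and "unital_endo A \<rho>"
    and "WPS A \<rho> \<epsilon>"
    and "d \<ge> 2"
    and "mCP A \<rho> \<epsilon> d \<psi>"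
  shows "cstar_span {\<psi> i * f | i f. i < d \<and> f \<in> centre_fix A \<rho>}
           = {b. \<forall>b'. sigmaB \<psi> d b' * b = b * b'}"
proof
  show "cstar_span {\<psi> i * f | i f. i < d \<and> f \<in> centre_fix A \<rho>}
          \<subseteq> {b. \<forall>b'. sigmaB \<psi> d b' * b = b * b'}"
    by (rule cstar_span_least)
      (auto simp: isometry_mult_centre_fix_intertw[OF assms(1,2,5)]
        distrib_left distrib_right mult_scaleC_left mult_scaleC_right)
next
  show "{b. \<forall>b'. sigmaB \<psi> d b' * b = b * b'}
          \<subseteq> cstar_span {\<psi> i * f | i f. i < d \<and> f \<in> centre_fix A \<rho>}"
  proof
    fix b assume b: "b \<in> {b. \<forall>b'. sigmaB \<psi> d b' * b = b * b'}"
    have "b = (\<Sum>i<d. \<psi> i * adj (\<psi> i)) * b" using assms(5) unfolding mCP_def by simp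
    also have "\<dots> = (\<Sum>i<d. \<psi> i * (adj (\<psi> i) * b))" by (simp add: sum_distrib_right mult.assoc)
    also have "\<dots> \<in> cstar_span {\<psi> i * f | i f. i < d \<and> f \<in> centre_fix A \<rho>}"
      using adj_isometry_mult_intertw_in_centre_fix[OF assms(5)] b
      by (intro sum_in_cstar_span) blast
    finally show "b \<in> cstar_span {\<psi> i * f | i f. i < d \<and> f \<in> centre_fix A \<rho>}" .
  qed
qed

end
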